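(* Let $\lambda_1,\lambda_2$ and $H$ be as in the context. For every $c>0$ there exists a unique $\widetilde{\theta_c}\in(0,\frac{\pi}{2})\cap(0,\theta_c^+)$ such that $H(c,\widetilde{\theta_c})=0$.
   Context: Either $\lambda_1>\lambda_2>0$ or $\lambda_1=\lambda_2=1$. For $c>0$ put $\theta_c^+=\pi$ if $c>\sqrt2\lambda_1$ and $\theta_c^+=\arccos(1-c^2/\lambda_1^2)$ if $0<c\le\sqrt2\lambda_1$; $\Omega=\{(c,\theta): c>0,\ |\theta|<\theta_c^+\}$. For $(c,\theta)\in\Omega$: $D=\sin\theta/c$; $\varphi$ is the global solution of $\varphi'(u)=\sqrt{c^2+2\cos\theta\,B(u)-D^2B(u)^2}$, $\varphi(0)=0$, where $B(u)=\lambda_1^2\cos^2\varphi(u)+\lambda_2^2\sin^2\varphi(u)$; $U>0$ is the unique number with $\varphi(U)=\pi$; $f$ solves $f'(u)=DB(u)$, $f(0)=0$; $G(u)=\int_0^u\frac{c-\varphi'(s)}{B(s)}ds$; and $H(c,\theta)=Df(U)+cG(U)$. *)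

theory Defs
  imports "HOL-Analysis.Analysis"
begin

definition theta_plus :: "real \<Rightarrow> real \<Rightarrow> real" where
  "theta_plus l1 c = (if c > sqrt 2 * l1 then pi else arccos (1 - c\<^sup>2 / l1\<^sup>2))"

definition Omega :: "real \<Rightarrow> (real \<times> real) set" where
  "Omega l1 = {(c, \<theta>). c > 0 \<and> \<bar>\<theta>\<bar> < theta_plus l1 c}"

definition Dco :: "real \<Rightarrow> real \<Rightarrow> real" where
  "Dco c \<theta> = sin \<theta> / c"

definition Bang :: "real \<Rightarrow> real \<Rightarrow> real \<Rightarrow> real" where
  "Bang l1 l2 x = l1\<^sup>2 * (cos x)\<^sup>2 + l2\<^sup>2 * (sin x)\<^sup>2"

definition phiRHS :: "real \<Rightarrow> real \<Rightarrow> real \<Rightarrow> real \<Rightarrow> real \<Rightarrow> real" where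
  "phiRHS l1 l2 c \<theta> x =
     sqrt (c\<^sup>2 + 2 * cos \<theta> * Bang l1 l2 x - (Dco c \<theta>)\<^sup>2 * (Bang l1 l2 x)\<^sup>2)"

definition phi :: "real \<Rightarrow> real \<Rightarrow> real \<Rightarrow> real \<Rightarrow> real \<Rightarrow> real" where
  "phi l1 l2 c \<theta> = (THE \<phi>. \<phi> 0 = 0 \<and>
      (\<forall>u. (\<phi> has_real_derivative phiRHS l1 l2 c \<theta> (\<phi> u)) (at u)))"

definition Bfun :: "real \<Rightarrow> real \<Rightarrow> real \<Rightarrow> real \<Rightarrow> real \<Rightarrow> real" where
  "Bfun l1 l2 c \<theta> u = Bang l1 l2 (phi l1 l2 c \<theta> u)"

definition Uend :: "real \<Rightarrow> real \<Rightarrow> real \<Rightarrow> real \<Rightarrow> real" where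
  "Uend l1 l2 c \<theta> = (THE U. U > 0 \<and> phi l1 l2 c \<theta> U = pi)"

definition ffun :: "real \<Rightarrow> real \<Rightarrow> real \<Rightarrow> real \<Rightarrow> real \<Rightarrow> real" where
  "ffun l1 l2 c \<theta> = (THE f. f 0 = 0 \<and>
      (\<forall>u. (f has_real_derivative Dco c \<theta> * Bfun l1 l2 c \<theta> u) (at u)))"

definition Gfun :: "real \<Rightarrow> real \<Rightarrow> real \<Rightarrow> real \<Rightarrow> real \<Rightarrow> real" where
  "Gfun l1 l2 c \<theta> u = integral {0..u}
      (\<lambda>s. (c - deriv (phi l1 l2 c \<theta>) s) / Bfun l1 l2 c \<theta> s)"

definition Hfun :: "real \<Rightarrow> real \<Rightarrow> real \<Rightarrow> real \<Rightarrow> real" where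
  "Hfun l1 l2 c \<theta> = Dco c \<theta> * ffun l1 l2 c \<theta> (Uend l1 l2 c \<theta>)
      + c * Gfun l1 l2 c \<theta> (Uend l1 l2 c \<theta>)"

end

theory Submission
  imports Defs
begin

(* Since phi' = phiRHS(phi) > 0 on Omega, the substitution x = phi u turns H(c, theta) into
   J(theta) = H_integral l1 l2 c theta, the integral over [0, pi] of
   ((D B)^2 + c^2) / (B F) - c / B with B = Bang x and F = phiRHS x. For theta in [0, pi/2],
   D^2 increases and F decreases with theta, so J is strictly increasing there; this gives
   uniqueness. J(0) < 0 because F > c at theta = 0. If c > lambda_1, then pi/2 < theta_plus
   and J(pi/2) > 0 because F <= c. If c <= lambda_1, then theta_plus <= pi/2, and as theta
   tends to theta_plus we have F(0)^2 -> 0 while F(x)^2 grows at most like x^2, so the term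
   c^2 / (B F) makes J diverge logarithmically. The intermediate value theorem gives the zero. *)

lemma exists_antiderivative:
  fixes g :: "real \<Rightarrow> real"
  assumes "continuous_on UNIV g"
  obtains G where "G 0 = 0" "\<And>x. (G has_real_derivative g x) (at x)"
proof -
  have "isCont g x" for x
    using assms by (simp add: continuous_on_eq_continuous_at[OF open_UNIV])
  then obtain F where "\<forall>x::real. -\<infinity> < x \<longrightarrow> x < \<infinity> \<longrightarrow> (F has_vector_derivative g x) (at x)"
    using einterval_antiderivative[of "-\<infinity>" "\<infinity>" g] by auto
  then have F: "(F has_real_derivative g x) (at x)" for x
    by (simp add: has_real_derivative_iff_has_vector_derivative)
  show ?thesis
    by (rule that[of "\<lambda>x. F x - F 0"]) (use DERIV_diff[OF F DERIV_const] in auto)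
qed

lemma integral_eq_antiderivative_diff:
  fixes G g :: "real \<Rightarrow> real"
  assumes "a \<le> b" "\<And>x. x \<in> {a..b} \<Longrightarrow> (G has_real_derivative g x) (at x)"
  shows "integral {a..b} g = G b - G a"
proof -
  have "(g has_integral (G b - G a)) {a..b}"
    by (rule fundamental_theorem_of_calculus[OF assms(1)])
      (use assms(2) in \<open>auto simp: has_real_derivative_iff_has_vector_derivative[symmetric]
          intro: has_field_derivative_at_within\<close>)
  then show ?thesis
    by (rule integral_unique)
qed

lemma the_antiderivative_eq_integral:
  fixes g :: "real \<Rightarrow> real"
  assumes "continuous_on UNIV g" "0 \<le> b"
  shows "(THE f. f 0 = 0 \<and> (\<forall>u. (f has_real_derivative g u) (at u))) b = integral {0..b} g"
proof -
  obtain G where G0: "G 0 = 0" and G: "\<And>x. (G has_real_derivative g x) (at x)"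
    using exists_antiderivative assms(1) by blast
  have "(THE f. f 0 = 0 \<and> (\<forall>u. (f has_real_derivative g u) (at u))) = G"
  proof (rule the_equality)
    fix f assume f: "f 0 = 0 \<and> (\<forall>u. (f has_real_derivative g u) (at u))"
    have "((\<lambda>u. f u - G u) has_real_derivative 0) (at x)" for x
      using DERIV_diff[OF conjunct2[OF f, rule_format] G, of x] by simp
    then have "f u - G u = f 0 - G 0" for u
      using DERIV_isconst_all[of "\<lambda>u. f u - G u"] by blast
    then show "f = G"
      using f G0 by auto
  qed (use G0 G in blast)
  then show ?thesis
    using integral_eq_antiderivative_diff[OF assms(2) G] G0 by simp
qed

lemma strict_mono_if_DERIV_pos:
  fixes f :: "real \<Rightarrow> real"
  assumes "\<And>x. (f has_real_derivative f' x) (at x)" "\<And>x. 0 < f' x"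
  shows "strict_mono f"
proof (rule strict_monoI)
  fix x y :: real
  assume "x < y"
  show "f x < f y"
    using DERIV_pos_imp_increasing[OF \<open>x < y\<close>, of f] assms by blast
qed

lemma surj_if_DERIV_ge:
  fixes T :: "real \<Rightarrow> real"
  assumes T: "\<And>x. (T has_real_derivative T' x) (at x)" and bound: "\<And>x. m \<le> T' x" and "0 < m"
  shows "surj T"
  unfolding surj_def
proof
  fix y
  have growth: "m * (b - a) \<le> T b - T a" if "a \<le> b" for a b
  proof -
    have "T a - m * a \<le> T b - m * b"
    proof (rule DERIV_nonneg_imp_nondecreasing[OF that])
      fix x
      have "((\<lambda>x. T x - m * x) has_real_derivative T' x - m * 1) (at x)"
        by (intro DERIV_diff T DERIV_cmult DERIV_ident)
      then show "\<exists>d. ((\<lambda>x. T x - m * x) has_real_derivative d) (at x) \<and> 0 \<le> d"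
        using bound[of x] by auto
    qed
    then show ?thesis
      by (simp add: algebra_simps)
  qed
  define r where "r = \<bar>y - T 0\<bar> / m"
  have r: "0 \<le> r" "m * r = \<bar>y - T 0\<bar>"
    using \<open>0 < m\<close> by (auto simp: r_def)
  then have "T (- r) \<le> y" "y \<le> T r"
    using growth[of "- r" 0] growth[of 0 r] abs_ge_self[of "y - T 0"]
      abs_ge_minus_self[of "y - T 0"] by auto
  moreover have "isCont T x" for x
    using T by (rule DERIV_isCont)
  ultimately show "\<exists>x. y = T x"
    using IVT[of T "- r" y r] r by (metis neg_le_0_iff_le order.trans)
qed

lemma antiderivative_along_solution:
  assumes T: "\<And>x. (T has_real_derivative 1 / F x) (at x)" and pos: "\<And>x. 0 < F x"
    and \<psi>: "\<And>u. (\<psi> has_real_derivative F (\<psi> u)) (at u)"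
  shows "T (\<psi> u) = u + T (\<psi> 0)"
proof -
  have "((\<lambda>u. T (\<psi> u) - u) has_real_derivative 0) (at x)" for x
    using pos[of "\<psi> x"] DERIV_diff[OF DERIV_chain2[OF T \<psi>[of x]] DERIV_ident] by simp
  then show ?thesis
    using DERIV_isconst_all[of "\<lambda>u. T (\<psi> u) - u" u 0] by simp
qed

lemma autonomous_ode_solution_unique:
  fixes F :: "real \<Rightarrow> real"
  assumes cont: "continuous_on UNIV F" and pos: "\<And>x. 0 < F x"
    and \<psi>1: "\<And>u. (\<psi>1 has_real_derivative F (\<psi>1 u)) (at u)"
    and \<psi>2: "\<And>u. (\<psi>2 has_real_derivative F (\<psi>2 u)) (at u)"
    and "\<psi>1 0 = \<psi>2 0"
  shows "\<psi>1 = \<psi>2"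
proof -
  have "continuous_on UNIV (\<lambda>x. 1 / F x)"
    using pos by (intro continuous_intros cont) (auto simp: less_imp_neq[symmetric])
  then obtain T where T: "\<And>x. (T has_real_derivative 1 / F x) (at x)"
    using exists_antiderivative by blast
  have "strict_mono T"
    by (rule strict_mono_if_DERIV_pos[OF T]) (use pos in simp)
  moreover have "T (\<psi>1 u) = T (\<psi>2 u)" for u
    using antiderivative_along_solution[OF T pos \<psi>1, of u]
      antiderivative_along_solution[OF T pos \<psi>2, of u] \<open>\<psi>1 0 = \<psi>2 0\<close> by simp
  ultimately show ?thesis
    by (simp add: strict_mono_eq fun_eq_iff)
qed

lemma autonomous_ode_solution_exists:
  fixes F :: "real \<Rightarrow> real"
  assumes cont: "continuous_on UNIV F" and pos: "\<And>x. 0 < F x" and bdd: "\<And>x. F x \<le> M"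
  obtains \<phi> where "\<phi> 0 = 0" "\<And>u. (\<phi> has_real_derivative F (\<phi> u)) (at u)" "surj \<phi>"
proof -
  \<comment> \<open>The solution is the inverse of the primitive of 1 / F vanishing at 0.\<close>
  have "continuous_on UNIV (\<lambda>x. 1 / F x)"
    using pos by (intro continuous_intros cont) (auto simp: less_imp_neq[symmetric])
  then obtain T where T0: "T 0 = 0" and T: "\<And>x. (T has_real_derivative 1 / F x) (at x)"
    using exists_antiderivative by blast
  have "strict_mono T"
    by (rule strict_mono_if_DERIV_pos[OF T]) (use pos in simp)
  then have inj: "inj T"
    by (rule strict_mono_imp_inj_on)
  have "0 < M"
    using pos[of 0] bdd[of 0] by linarith
  then have "surj T"
    using pos bdd by (intro surj_if_DERIV_ge[OF T, of "1 / M"] divide_left_mono mult_pos_pos) auto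
  define \<phi> where "\<phi> = inv T"
  have T\<phi>: "T (\<phi> u) = u" for u
    using \<open>surj T\<close> by (simp add: \<phi>_def surj_f_inv_f)
  have \<phi>T: "\<phi> (T x) = x" for x
    using inj by (simp add: \<phi>_def)
  have "(\<phi> has_real_derivative F (\<phi> u)) (at u)" for u
  proof -
    have "isCont \<phi> (T (\<phi> u))"
      by (rule isCont_inverse_function[where f = T and d = 1]) (use \<phi>T DERIV_isCont[OF T] in auto)
    then have "(\<phi> has_real_derivative inverse (1 / F (\<phi> u))) (at u)"
      using pos[of "\<phi> u"]
      by (intro DERIV_inverse_function[where f = T and a = "u - 1" and b = "u + 1"] T)
         (auto simp: T\<phi>)
    then show ?thesis
      by simp
  qed
  moreover have "\<phi> 0 = 0"
    using \<phi>T[of 0] T0 by simp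
  moreover have "surj \<phi>"
    using \<phi>T by (metis surjI)
  ultimately show ?thesis
    using that by blast
qed

lemma integral_along_flow:
  fixes \<phi> F g :: "real \<Rightarrow> real"
  assumes \<phi>: "\<And>u. (\<phi> has_real_derivative F (\<phi> u)) (at u)" and pos: "\<And>x. 0 < F x"
    and cont: "continuous_on {\<phi> a..\<phi> b} (\<lambda>x. g x / F x)" and "a \<le> b"
  shows "integral {a..b} (\<lambda>u. g (\<phi> u)) = integral {\<phi> a..\<phi> b} (\<lambda>x. g x / F x)"
proof -
  have "mono \<phi>"
    by (intro strict_mono_mono strict_mono_if_DERIV_pos[OF \<phi>] pos)
  then have "\<phi> ` {a..b} \<subseteq> {\<phi> a..\<phi> b}" and "\<phi> a \<le> \<phi> b"
    using \<open>a \<le> b\<close> by (auto simp: monoD)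
  moreover have "continuous_on {a..b} \<phi>"
    using \<phi> DERIV_isCont by (blast intro: continuous_at_imp_continuous_on)
  moreover have "(\<phi> has_real_derivative F (\<phi> x)) (at x within {a..b})" for x
    using \<phi> by (rule has_field_derivative_at_within)
  ultimately have "((\<lambda>u. F (\<phi> u) *\<^sub>R (g (\<phi> u) / F (\<phi> u))) has_integral
      integral {\<phi> a..\<phi> b} (\<lambda>x. g x / F x) - integral {\<phi> b..\<phi> a} (\<lambda>x. g x / F x)) {a..b}"
    by (intro has_integral_substitution_general[OF finite.emptyI \<open>a \<le> b\<close> _ cont]) auto
  moreover have "integral {\<phi> b..\<phi> a} (\<lambda>x. g x / F x) = 0"
    using \<open>\<phi> a \<le> \<phi> b\<close> by (cases "\<phi> a = \<phi> b") auto
  moreover have "F (\<phi> u) *\<^sub>R (g (\<phi> u) / F (\<phi> u)) = g (\<phi> u)" for u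
    using pos[of "\<phi> u"] by simp
  ultimately show ?thesis
    by (simp add: integral_unique)
qed

definition radicand :: "real \<Rightarrow> real \<Rightarrow> real \<Rightarrow> real" where
  "radicand c \<theta> B = c\<^sup>2 + 2 * cos \<theta> * B - (Dco c \<theta>)\<^sup>2 * B\<^sup>2"

lemma phiRHS_eq_sqrt_radicand: "phiRHS l1 l2 c \<theta> x = sqrt (radicand c \<theta> (Bang l1 l2 x))"
  by (simp add: phiRHS_def radicand_def)

lemma Bang_eq_sin: "Bang l1 l2 x = l1\<^sup>2 - (l1\<^sup>2 - l2\<^sup>2) * (sin x)\<^sup>2"
  by (simp add: Bang_def cos_squared_eq algebra_simps)

lemma Bang_bounds:
  assumes "0 \<le> l2" "l2 \<le> l1"
  shows "l2\<^sup>2 \<le> Bang l1 l2 x" "Bang l1 l2 x \<le> l1\<^sup>2"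
proof -
  have "0 \<le> l1\<^sup>2 - l2\<^sup>2"
    using assms by (simp add: power_mono)
  moreover have "(sin x)\<^sup>2 \<le> 1"
    by (simp add: abs_square_le_1)
  ultimately have "0 \<le> (l1\<^sup>2 - l2\<^sup>2) * (sin x)\<^sup>2" "(l1\<^sup>2 - l2\<^sup>2) * (sin x)\<^sup>2 \<le> l1\<^sup>2 - l2\<^sup>2"
    by (auto intro: mult_left_le)
  then show "l2\<^sup>2 \<le> Bang l1 l2 x" "Bang l1 l2 x \<le> l1\<^sup>2"
    unfolding Bang_eq_sin by linarith+
qed

lemma Bang_pos:
  assumes "0 < l2" "l2 \<le> l1"
  shows "0 < Bang l1 l2 x"
proof -
  have "0 < l2\<^sup>2"
    using assms by simp
  then show ?thesis
    using Bang_bounds(1)[of l2 l1 x] assms by linarith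
qed

(* radicand is concave in B and equals c^2 at B = 0. *)
lemma radicand_ge_min:
  assumes "0 \<le> B" "B \<le> a"
  shows "min (c\<^sup>2) (radicand c \<theta> a) \<le> radicand c \<theta> B"
proof -
  define k where "k = 2 * cos \<theta> - (Dco c \<theta>)\<^sup>2 * a"
  have split: "radicand c \<theta> b = c\<^sup>2 + b * (2 * cos \<theta> - (Dco c \<theta>)\<^sup>2 * b)" for b
    by (simp add: radicand_def power2_eq_square algebra_simps)
  have "B * k \<le> B * (2 * cos \<theta> - (Dco c \<theta>)\<^sup>2 * B)"
    using assms by (intro mult_left_mono) (auto simp: k_def mult_left_mono)
  moreover have "min 0 (a * k) \<le> B * k"
  proof (cases "0 \<le> k")
    case True
    then show ?thesis using assms by (simp add: min_le_iff_disj)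
  next
    case False
    then have "a * k \<le> B * k" using assms by (intro mult_right_mono_neg) auto
    then show ?thesis by (simp add: min_le_iff_disj)
  qed
  ultimately show ?thesis
    unfolding split[of B] split[of a] k_def[symmetric] by linarith
qed

lemma radicand_le:
  assumes "0 \<le> B"
  shows "radicand c \<theta> B \<le> c\<^sup>2 + 2 * B"
proof -
  have "cos \<theta> * B \<le> 1 * B"
    using assms by (intro mult_right_mono) auto
  moreover have "0 \<le> (Dco c \<theta>)\<^sup>2 * B\<^sup>2"
    by simp
  ultimately show ?thesis
    unfolding radicand_def by linarith
qed

lemma radicand_eq_cos:
  assumes "c \<noteq> 0"
  shows "radicand c \<theta> a = ((c\<^sup>2 + a * cos \<theta>)\<^sup>2 - a\<^sup>2) / c\<^sup>2"
proof -
  have "(Dco c \<theta>)\<^sup>2 * a\<^sup>2 = (1 - (cos \<theta>)\<^sup>2) * a\<^sup>2 / c\<^sup>2"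
    by (simp add: Dco_def power_divide sin_squared_eq)
  then have "radicand c \<theta> a = c\<^sup>2 + 2 * cos \<theta> * a - (1 - (cos \<theta>)\<^sup>2) * a\<^sup>2 / c\<^sup>2"
    by (simp add: radicand_def)
  also have "\<dots> = ((c\<^sup>2 + a * cos \<theta>)\<^sup>2 - a\<^sup>2) / c\<^sup>2"
    using assms by (simp add: field_simps power2_eq_square)
  finally show ?thesis .
qed

lemma radicand_pos_if_in_Omega:
  assumes l1: "0 < l1" and \<Omega>: "(c, \<theta>) \<in> Omega l1"
  shows "0 < radicand c \<theta> (l1\<^sup>2)"
proof -
  define a where "a = l1\<^sup>2"
  have a: "0 < a" and c: "0 < c" and \<theta>: "\<bar>\<theta>\<bar> < theta_plus l1 c"
    using l1 \<Omega> by (auto simp: a_def Omega_def)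
  have "1 - c\<^sup>2 / a < cos \<theta>"
  proof (cases "c > sqrt 2 * l1")
    case True
    then have "2 * a < c\<^sup>2"
      using l1 power_strict_mono[OF True, of 2] by (simp add: a_def power_mult_distrib)
    then have "1 - c\<^sup>2 / a < -1"
      using a by (simp add: field_simps)
    then show ?thesis
      using cos_ge_minus_one[of \<theta>] by linarith
  next
    case False
    define y where "y = 1 - c\<^sup>2 / a"
    have "c\<^sup>2 \<le> 2 * a"
      using c power_mono[of c "sqrt 2 * l1" 2] False by (simp add: a_def power_mult_distrib)
    then have y: "-1 \<le> y" "y \<le> 1"
      using a by (auto simp: y_def field_simps)
    have "\<bar>\<theta>\<bar> < arccos y"
      using \<theta> False by (simp add: theta_plus_def y_def a_def)
    then have "cos (arccos y) < cos \<bar>\<theta>\<bar>"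
      using arccos_bounded[OF y] by (intro cos_monotone_0_pi) auto
    then show ?thesis
      using y by (simp add: y_def)
  qed
  then have "a < c\<^sup>2 + a * cos \<theta>"
    using a by (simp add: field_simps)
  then have "a\<^sup>2 < (c\<^sup>2 + a * cos \<theta>)\<^sup>2"
    using a by (intro power_strict_mono) auto
  then show ?thesis
    using radicand_eq_cos[of c \<theta> a] c by (simp add: a_def)
qed

lemma Dco_sq_mono:
  assumes "0 \<le> \<theta>1" "\<theta>1 \<le> \<theta>2" "\<theta>2 \<le> pi / 2"
  shows "(Dco c \<theta>1)\<^sup>2 \<le> (Dco c \<theta>2)\<^sup>2"
proof -
  have "sin \<theta>1 \<le> sin \<theta>2" "0 \<le> sin \<theta>1"
    using assms by (auto intro: sin_monotone_2pi_le sin_ge_zero)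
  then have "(sin \<theta>1)\<^sup>2 \<le> (sin \<theta>2)\<^sup>2"
    by (intro power_mono)
  then show ?thesis
    by (simp add: Dco_def power_divide divide_right_mono)
qed

lemma radicand_strict_antimono:
  assumes "0 \<le> \<theta>1" "\<theta>1 < \<theta>2" "\<theta>2 \<le> pi / 2" "0 < B"
  shows "radicand c \<theta>2 B < radicand c \<theta>1 B"
proof -
  have "cos \<theta>2 < cos \<theta>1"
    using assms by (intro cos_monotone_0_pi) auto
  then have "2 * cos \<theta>2 * B < 2 * cos \<theta>1 * B"
    using assms by simp
  moreover have "(Dco c \<theta>1)\<^sup>2 * B\<^sup>2 \<le> (Dco c \<theta>2)\<^sup>2 * B\<^sup>2"
    using Dco_sq_mono[of \<theta>1 \<theta>2 c] assms by (intro mult_right_mono) auto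
  ultimately show ?thesis
    unfolding radicand_def by linarith
qed

lemma radicand_Bang_pos:
  assumes l: "0 < l2" "l2 \<le> l1" and \<Omega>: "(c, \<theta>) \<in> Omega l1"
  shows "0 < radicand c \<theta> (Bang l1 l2 x)"
proof -
  have "min (c\<^sup>2) (radicand c \<theta> (l1\<^sup>2)) \<le> radicand c \<theta> (Bang l1 l2 x)"
    using Bang_bounds[of l2 l1 x] Bang_pos[OF l, of x] l by (intro radicand_ge_min) auto
  moreover have "0 < min (c\<^sup>2) (radicand c \<theta> (l1\<^sup>2))"
    using radicand_pos_if_in_Omega[OF _ \<Omega>] l \<Omega> by (auto simp: Omega_def)
  ultimately show ?thesis
    by linarith
qed

lemma phiRHS_pos:
  assumes "0 < l2" "l2 \<le> l1" "(c, \<theta>) \<in> Omega l1"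
  shows "0 < phiRHS l1 l2 c \<theta> x"
  using radicand_Bang_pos[OF assms] by (simp add: phiRHS_eq_sqrt_radicand)

lemma theta_plus_eq_arccos:
  assumes "c \<le> sqrt 2 * l1"
  shows "theta_plus l1 c = arccos (1 - c\<^sup>2 / l1\<^sup>2)"
  using assms by (simp add: theta_plus_def)

lemma le_imp_le_sqrt2_mult:
  assumes "0 < c" "c \<le> l1"
  shows "c \<le> sqrt 2 * l1"
proof -
  have "1 * l1 \<le> sqrt 2 * l1"
    using assms by (intro mult_right_mono) auto
  then show ?thesis
    using assms by linarith
qed

lemma theta_plus_pos:
  assumes "0 < l1" "0 < c"
  shows "0 < theta_plus l1 c"
proof (cases "c > sqrt 2 * l1")
  case False
  have "c\<^sup>2 \<le> 2 * l1\<^sup>2"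
    using assms False power_mono[of c "sqrt 2 * l1" 2] by (simp add: power_mult_distrib)
  then have "arccos 1 < arccos (1 - c\<^sup>2 / l1\<^sup>2)"
    using assms by (intro arccos_less_arccos) (auto simp: field_simps)
  then show ?thesis
    using False by (simp add: theta_plus_def)
qed (simp add: theta_plus_def)

lemma pi_half_lt_theta_plus:
  assumes "0 < l1" "l1 < c"
  shows "pi / 2 < theta_plus l1 c"
proof (cases "c > sqrt 2 * l1")
  case False
  have "c\<^sup>2 \<le> 2 * l1\<^sup>2"
    using assms False power_mono[of c "sqrt 2 * l1" 2] by (simp add: power_mult_distrib)
  moreover have "l1\<^sup>2 < c\<^sup>2"
    using assms by (intro power_strict_mono) auto
  ultimately have "arccos 0 < arccos (1 - c\<^sup>2 / l1\<^sup>2)"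
    using assms by (intro arccos_less_arccos) (auto simp: field_simps)
  then show ?thesis
    using False by (simp add: theta_plus_def)
qed (simp add: theta_plus_def)

lemma theta_plus_le_pi_half:
  assumes "0 < c" "c \<le> l1"
  shows "theta_plus l1 c \<le> pi / 2"
proof -
  have "c\<^sup>2 \<le> l1\<^sup>2" "0 < l1\<^sup>2"
    using assms by (auto intro: power_mono)
  then have "c\<^sup>2 / l1\<^sup>2 \<le> 1"
    by simp
  moreover have "0 \<le> c\<^sup>2 / l1\<^sup>2"
    by simp
  ultimately show ?thesis
    unfolding theta_plus_eq_arccos[OF le_imp_le_sqrt2_mult[OF assms]] by (intro arccos_le_pi2) auto
qed

lemma radicand_at_theta_plus:
  assumes "0 < c" "c \<le> sqrt 2 * l1"
  shows "radicand c (theta_plus l1 c) (l1\<^sup>2) = 0"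
proof -
  define a where "a = l1\<^sup>2"
  have "0 < sqrt 2 * l1"
    using assms by linarith
  then have a: "0 < a"
    by (simp add: a_def zero_less_mult_iff)
  have "c\<^sup>2 \<le> (sqrt 2 * l1)\<^sup>2"
    using assms by (intro power_mono) auto
  then have "c\<^sup>2 \<le> 2 * a"
    by (simp add: a_def power_mult_distrib)
  then have "c\<^sup>2 / a \<le> 2"
    using a by (simp add: divide_le_eq)
  moreover have "0 \<le> c\<^sup>2 / a"
    using a by simp
  ultimately have "cos (theta_plus l1 c) = 1 - c\<^sup>2 / a"
    unfolding theta_plus_eq_arccos[OF assms(2)] a_def[symmetric] by (intro cos_arccos) auto
  then have "c\<^sup>2 + a * cos (theta_plus l1 c) = a"
    using a by (simp add: right_diff_distrib)
  then show ?thesis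
    using assms by (simp add: radicand_eq_cos a_def)
qed

lemma continuous_on_Bang [continuous_intros]:
  fixes f :: "'a::t2_space \<Rightarrow> real"
  assumes "continuous_on S f"
  shows "continuous_on S (\<lambda>x. Bang l1 l2 (f x))"
  unfolding Bang_def by (intro continuous_intros assms)

lemma continuous_on_Dco [continuous_intros]:
  fixes f :: "'a::t2_space \<Rightarrow> real"
  assumes "continuous_on S f"
  shows "continuous_on S (\<lambda>x. Dco c (f x))"
  unfolding Dco_def divide_inverse by (intro continuous_intros assms)

lemma continuous_on_phiRHS [continuous_intros]:
  fixes f g :: "'a::t2_space \<Rightarrow> real"
  assumes "continuous_on S f" "continuous_on S g"
  shows "continuous_on S (\<lambda>x. phiRHS l1 l2 c (f x) (g x))"
  unfolding phiRHS_def by (intro continuous_intros assms)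

lemma phi_solves_ode:
  assumes l: "0 < l2" "l2 \<le> l1" and \<Omega>: "(c, \<theta>) \<in> Omega l1"
  shows "phi l1 l2 c \<theta> 0 = 0"
    and "\<And>u. (phi l1 l2 c \<theta> has_real_derivative phiRHS l1 l2 c \<theta> (phi l1 l2 c \<theta> u)) (at u)"
    and "surj (phi l1 l2 c \<theta>)"
proof -
  let ?F = "phiRHS l1 l2 c \<theta>"
  have pos: "0 < ?F x" for x
    by (rule phiRHS_pos[OF l \<Omega>])
  have "radicand c \<theta> (Bang l1 l2 x) \<le> c\<^sup>2 + 2 * l1\<^sup>2" for x
    using radicand_le[of "Bang l1 l2 x" c \<theta>] Bang_bounds[of l2 l1 x] Bang_pos[OF l, of x] l
    by linarith
  then have bdd: "?F x \<le> sqrt (c\<^sup>2 + 2 * l1\<^sup>2)" for x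
    unfolding phiRHS_eq_sqrt_radicand by (rule real_sqrt_le_mono)
  have cont: "continuous_on UNIV ?F"
    by (intro continuous_intros)
  obtain \<phi> where \<phi>: "\<phi> 0 = 0" "\<And>u. (\<phi> has_real_derivative ?F (\<phi> u)) (at u)" "surj \<phi>"
    using autonomous_ode_solution_exists[OF cont pos bdd] by blast
  have "phi l1 l2 c \<theta> = \<phi>"
    unfolding phi_def
  proof (rule the_equality)
    fix \<psi> assume "\<psi> 0 = 0 \<and> (\<forall>u. (\<psi> has_real_derivative ?F (\<psi> u)) (at u))"
    then show "\<psi> = \<phi>"
      using autonomous_ode_solution_unique[OF cont pos, of \<psi> \<phi>] \<phi> by auto
  qed (use \<phi> in auto)
  then show "phi l1 l2 c \<theta> 0 = 0"
    and "\<And>u. (phi l1 l2 c \<theta> has_real_derivative ?F (phi l1 l2 c \<theta> u)) (at u)"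
    and "surj (phi l1 l2 c \<theta>)"
    using \<phi> by auto
qed

lemma continuous_on_phi:
  assumes "0 < l2" "l2 \<le> l1" "(c, \<theta>) \<in> Omega l1"
  shows "continuous_on S (phi l1 l2 c \<theta>)"
  using phi_solves_ode(2)[OF assms] DERIV_isCont by (blast intro: continuous_at_imp_continuous_on)

lemma phi_Uend:
  assumes "0 < l2" "l2 \<le> l1" "(c, \<theta>) \<in> Omega l1"
  shows "0 < Uend l1 l2 c \<theta>" "phi l1 l2 c \<theta> (Uend l1 l2 c \<theta>) = pi"
proof -
  have mono: "strict_mono (phi l1 l2 c \<theta>)"
    using phi_solves_ode(2)[OF assms] phiRHS_pos[OF assms] by (rule strict_mono_if_DERIV_pos)
  obtain U where U: "phi l1 l2 c \<theta> U = pi"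
    using phi_solves_ode(3)[OF assms] by (metis surjD)
  then have "0 < U"
    using phi_solves_ode(1)[OF assms] mono by (metis pi_gt_zero strict_mono_less)
  have "Uend l1 l2 c \<theta> = U"
    unfolding Uend_def
  proof (rule the_equality)
    fix V assume "0 < V \<and> phi l1 l2 c \<theta> V = pi"
    then show "V = U"
      using U mono by (metis strict_mono_eq)
  qed (use U \<open>0 < U\<close> in auto)
  then show "0 < Uend l1 l2 c \<theta>" "phi l1 l2 c \<theta> (Uend l1 l2 c \<theta>) = pi"
    using U \<open>0 < U\<close> by auto
qed

lemma integral_along_phi:
  assumes l: "0 < l2" "l2 \<le> l1" and \<Omega>: "(c, \<theta>) \<in> Omega l1" and g: "continuous_on UNIV g"
  shows "integral {0..Uend l1 l2 c \<theta>} (\<lambda>u. g (phi l1 l2 c \<theta> u))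
    = integral {0..pi} (\<lambda>x. g x / phiRHS l1 l2 c \<theta> x)"
proof -
  have "continuous_on {0..pi} (\<lambda>x. g x / phiRHS l1 l2 c \<theta> x)"
    using phiRHS_pos[OF l \<Omega>]
    by (intro continuous_intros continuous_on_subset[OF g]) (auto simp: less_imp_neq[symmetric])
  then show ?thesis
    using integral_along_flow[OF phi_solves_ode(2)[OF l \<Omega>] phiRHS_pos[OF l \<Omega>],
        of 0 "Uend l1 l2 c \<theta>" g] phi_solves_ode(1)[OF l \<Omega>] phi_Uend[OF l \<Omega>]
    by simp
qed

lemma ffun_Uend:
  assumes l: "0 < l2" "l2 \<le> l1" and \<Omega>: "(c, \<theta>) \<in> Omega l1"
  shows "ffun l1 l2 c \<theta> (Uend l1 l2 c \<theta>)
    = integral {0..pi} (\<lambda>x. Dco c \<theta> * Bang l1 l2 x / phiRHS l1 l2 c \<theta> x)"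
proof -
  have "continuous_on UNIV (\<lambda>u. Dco c \<theta> * Bfun l1 l2 c \<theta> u)"
    unfolding Bfun_def by (intro continuous_intros continuous_on_phi[OF l \<Omega>])
  then have "ffun l1 l2 c \<theta> (Uend l1 l2 c \<theta>)
      = integral {0..Uend l1 l2 c \<theta>} (\<lambda>u. Dco c \<theta> * Bang l1 l2 (phi l1 l2 c \<theta> u))"
    unfolding ffun_def using the_antiderivative_eq_integral[OF _ less_imp_le[OF phi_Uend(1)[OF l \<Omega>]]]
    by (simp add: Bfun_def)
  also have "\<dots> = integral {0..pi} (\<lambda>x. Dco c \<theta> * Bang l1 l2 x / phiRHS l1 l2 c \<theta> x)"
    by (rule integral_along_phi[OF l \<Omega>]) (intro continuous_intros)
  finally show ?thesis .
qed

lemma Gfun_Uend: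
  assumes l: "0 < l2" "l2 \<le> l1" and \<Omega>: "(c, \<theta>) \<in> Omega l1"
  shows "Gfun l1 l2 c \<theta> (Uend l1 l2 c \<theta>)
    = integral {0..pi} (\<lambda>x. (c - phiRHS l1 l2 c \<theta> x) / Bang l1 l2 x / phiRHS l1 l2 c \<theta> x)"
proof -
  have "deriv (phi l1 l2 c \<theta>) u = phiRHS l1 l2 c \<theta> (phi l1 l2 c \<theta> u)" for u
    using phi_solves_ode(2)[OF l \<Omega>] by (rule DERIV_imp_deriv)
  then have "Gfun l1 l2 c \<theta> (Uend l1 l2 c \<theta>) = integral {0..Uend l1 l2 c \<theta>}
      (\<lambda>u. (c - phiRHS l1 l2 c \<theta> (phi l1 l2 c \<theta> u)) / Bang l1 l2 (phi l1 l2 c \<theta> u))"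
    by (simp add: Gfun_def Bfun_def)
  also have "\<dots> = integral {0..pi} (\<lambda>x. (c - phiRHS l1 l2 c \<theta> x) / Bang l1 l2 x / phiRHS l1 l2 c \<theta> x)"
    using Bang_pos[OF l]
    by (intro integral_along_phi[OF l \<Omega>] continuous_intros) (auto simp: less_imp_neq[symmetric])
  finally show ?thesis .
qed

(* The integrand of H in the variable x = phi u. *)
definition H_density :: "real \<Rightarrow> real \<Rightarrow> real \<Rightarrow> real \<Rightarrow> real \<Rightarrow> real" where
  "H_density l1 l2 c \<theta> x =
     ((Dco c \<theta>)\<^sup>2 * (Bang l1 l2 x)\<^sup>2 + c\<^sup>2) / (Bang l1 l2 x * phiRHS l1 l2 c \<theta> x) - c / Bang l1 l2 x"

definition H_integral :: "real \<Rightarrow> real \<Rightarrow> real \<Rightarrow> real \<Rightarrow> real" where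
  "H_integral l1 l2 c \<theta> = integral {0..pi} (H_density l1 l2 c \<theta>)"

lemma Hfun_eq_H_integral:
  assumes l: "0 < l2" "l2 \<le> l1" and \<Omega>: "(c, \<theta>) \<in> Omega l1"
  shows "Hfun l1 l2 c \<theta> = H_integral l1 l2 c \<theta>"
proof -
  define D where "D = Dco c \<theta>"
  define B where "B = Bang l1 l2"
  define F where "F = phiRHS l1 l2 c \<theta>"
  have F: "0 < F x" and B: "0 < B x" for x
    using phiRHS_pos[OF l \<Omega>] Bang_pos[OF l] by (auto simp: F_def B_def)
  have int: "(\<lambda>x. D * (D * B x / F x)) integrable_on {0..pi}"
    "(\<lambda>x. c * ((c - F x) / B x / F x)) integrable_on {0..pi}"
    using F B unfolding F_def B_def
    by (auto intro!: integrable_continuous_real continuous_intros simp: less_imp_neq[symmetric])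
  have "Hfun l1 l2 c \<theta>
      = D * integral {0..pi} (\<lambda>x. D * B x / F x) + c * integral {0..pi} (\<lambda>x. (c - F x) / B x / F x)"
    unfolding Hfun_def ffun_Uend[OF l \<Omega>] Gfun_Uend[OF l \<Omega>] D_def B_def F_def ..
  also have "\<dots> = integral {0..pi} (\<lambda>x. D * (D * B x / F x) + c * ((c - F x) / B x / F x))"
    by (simp only: integral_add[OF int] integral_mult_right)
  also have "\<dots> = H_integral l1 l2 c \<theta>"
  proof -
    have "D * (D * B x / F x) + c * ((c - F x) / B x / F x) = H_density l1 l2 c \<theta> x" for x
      using F[of x] B[of x]
      by (simp add: H_density_def D_def B_def F_def field_simps power2_eq_square)
    then show ?thesis
      by (simp add: H_integral_def)
  qed
  finally show ?thesis .
qed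

lemma continuous_on_H_density:
  fixes f g :: "'a::t2_space \<Rightarrow> real"
  assumes l: "0 < l2" "l2 \<le> l1" and \<Omega>: "\<And>x. x \<in> S \<Longrightarrow> (c, f x) \<in> Omega l1"
    and "continuous_on S f" "continuous_on S g"
  shows "continuous_on S (\<lambda>x. H_density l1 l2 c (f x) (g x))"
  unfolding H_density_def
  using assms phiRHS_pos[OF l \<Omega>] Bang_pos[OF l]
  by (intro continuous_intros) (auto simp: less_imp_neq[symmetric])

lemma continuous_on_H_integral:
  assumes l: "0 < l2" "l2 \<le> l1" and \<Omega>: "\<And>\<theta>. \<theta> \<in> S \<Longrightarrow> (c, \<theta>) \<in> Omega l1"
  shows "continuous_on S (H_integral l1 l2 c)"
proof -
  have "continuous_on (S \<times> cbox 0 pi) (\<lambda>p. H_density l1 l2 c (fst p) (snd p))"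
    using \<Omega> by (intro continuous_on_H_density[OF l] continuous_intros) auto
  from integral_continuous_on_param[OF this[unfolded case_prod_beta'[symmetric]]]
  show ?thesis
    by (simp add: H_integral_def)
qed

lemma H_density_strict_mono:
  assumes l: "0 < l2" "l2 \<le> l1" and \<theta>: "0 \<le> \<theta>1" "\<theta>1 < \<theta>2" "\<theta>2 \<le> pi / 2"
    and \<Omega>: "(c, \<theta>2) \<in> Omega l1"
  shows "H_density l1 l2 c \<theta>1 x < H_density l1 l2 c \<theta>2 x"
proof -
  have \<Omega>1: "(c, \<theta>1) \<in> Omega l1" and c: "0 < c"
    using \<Omega> \<theta> by (auto simp: Omega_def)
  define B where "B = Bang l1 l2 x"
  define F1 where "F1 = phiRHS l1 l2 c \<theta>1 x"
  define F2 where "F2 = phiRHS l1 l2 c \<theta>2 x"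
  define N1 where "N1 = (Dco c \<theta>1)\<^sup>2 * B\<^sup>2 + c\<^sup>2"
  define N2 where "N2 = (Dco c \<theta>2)\<^sup>2 * B\<^sup>2 + c\<^sup>2"
  have B: "0 < B" and F: "0 < F1" "0 < F2"
    using Bang_pos[OF l] phiRHS_pos[OF l \<Omega>1] phiRHS_pos[OF l \<Omega>] by (auto simp: B_def F1_def F2_def)
  have "F2 < F1"
    unfolding F1_def F2_def phiRHS_eq_sqrt_radicand
    using radicand_strict_antimono[OF \<theta>] Bang_pos[OF l] by (simp add: real_sqrt_less_mono)
  have "N1 \<le> N2"
    using Dco_sq_mono[of \<theta>1 \<theta>2 c] \<theta> by (simp add: N1_def N2_def mult_right_mono)
  have "0 < N1"
    using c by (simp add: N1_def add_nonneg_pos)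
  have "N1 / (B * F1) < N1 / (B * F2)"
    using B F \<open>F2 < F1\<close> \<open>0 < N1\<close> by (intro divide_strict_left_mono) auto
  also have "\<dots> \<le> N2 / (B * F2)"
    using B F \<open>N1 \<le> N2\<close> by (intro divide_right_mono) auto
  finally show ?thesis
    by (simp add: H_density_def N1_def N2_def B_def F1_def F2_def)
qed

lemma H_integral_strict_mono_on:
  assumes l: "0 < l2" "l2 \<le> l1"
  shows "strict_mono_on {\<theta>. 0 \<le> \<theta> \<and> \<theta> \<le> pi / 2 \<and> (c, \<theta>) \<in> Omega l1} (H_integral l1 l2 c)"
proof (rule strict_mono_onI)
  fix \<theta>1 \<theta>2
  assume \<theta>: "\<theta>1 \<in> {\<theta>. 0 \<le> \<theta> \<and> \<theta> \<le> pi / 2 \<and> (c, \<theta>) \<in> Omega l1}"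
    "\<theta>2 \<in> {\<theta>. 0 \<le> \<theta> \<and> \<theta> \<le> pi / 2 \<and> (c, \<theta>) \<in> Omega l1}" "\<theta>1 < \<theta>2"
  then show "H_integral l1 l2 c \<theta>1 < H_integral l1 l2 c \<theta>2"
    unfolding H_integral_def
    by (intro integral_less_real H_density_strict_mono[OF l] continuous_on_H_density[OF l]
        continuous_intros) auto
qed

lemma H_density_neg_at_zero:
  assumes l: "0 < l2" "l2 \<le> l1" and c: "0 < c"
  shows "H_density l1 l2 c 0 x < 0"
proof -
  define B where "B = Bang l1 l2 x"
  have B: "0 < B"
    using Bang_pos[OF l] by (simp add: B_def)
  have "sqrt (c\<^sup>2) < sqrt (c\<^sup>2 + 2 * B)"
    using B by (intro real_sqrt_less_mono) simp
  then have F: "c < phiRHS l1 l2 c 0 x"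
    using c by (simp add: phiRHS_eq_sqrt_radicand radicand_def Dco_def B_def)
  have "c\<^sup>2 / (B * phiRHS l1 l2 c 0 x) < c\<^sup>2 / (B * c)"
    using B c F by (intro divide_strict_left_mono mult_strict_left_mono) auto
  then show ?thesis
    using c by (simp add: H_density_def Dco_def B_def power2_eq_square)
qed

lemma H_density_pos_at_pi_half:
  assumes l: "0 < l2" "l2 \<le> l1" and c: "l1 < c"
  shows "0 < H_density l1 l2 c (pi / 2) x"
proof -
  define B where "B = Bang l1 l2 x"
  define F where "F = phiRHS l1 l2 c (pi / 2) x"
  have B: "0 < B" "B \<le> l1\<^sup>2"
    using Bang_pos[OF l] Bang_bounds[of l2 l1 x] l by (auto simp: B_def)
  have c0: "0 < c"
    using l c by linarith
  have rad: "radicand c (pi / 2) B = c\<^sup>2 - B\<^sup>2 / c\<^sup>2"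
    by (simp add: radicand_def Dco_def power_divide)
  have "l1\<^sup>2 < c\<^sup>2"
    using l c by (intro power_strict_mono) auto
  then have "B < c\<^sup>2"
    using B by linarith
  then have "B\<^sup>2 < (c\<^sup>2)\<^sup>2"
    using B by (intro power_strict_mono) auto
  then have "0 < F"
    using c0 by (simp add: F_def phiRHS_eq_sqrt_radicand B_def[symmetric] rad field_simps power2_eq_square)
  moreover have "F \<le> c"
    using c0 real_sqrt_le_mono[of "c\<^sup>2 - B\<^sup>2 / c\<^sup>2" "c\<^sup>2"]
    by (simp add: F_def phiRHS_eq_sqrt_radicand B_def[symmetric] rad)
  ultimately have "c\<^sup>2 / (B * F) \<ge> c\<^sup>2 / (B * c)"
    using B c0 by (intro divide_left_mono mult_left_mono mult_pos_pos) auto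
  moreover have "c\<^sup>2 / (B * F) < ((Dco c (pi / 2))\<^sup>2 * B\<^sup>2 + c\<^sup>2) / (B * F)"
    using B \<open>0 < F\<close> c0 by (intro divide_strict_right_mono) (auto simp: Dco_def)
  ultimately show ?thesis
    using c0 B by (simp add: H_density_def F_def[symmetric] B_def[symmetric] power2_eq_square)
qed

lemma H_integral_neg_at_zero:
  assumes l: "0 < l2" "l2 \<le> l1" and c: "0 < c"
  shows "H_integral l1 l2 c 0 < 0"
proof -
  have "(c, 0) \<in> Omega l1"
    using theta_plus_pos[of l1 c] l c by (simp add: Omega_def)
  then have "integral {0..pi} (H_density l1 l2 c 0) < integral {0..pi} (\<lambda>x. 0)"
    using H_density_neg_at_zero[OF l c] pi_ge_two
    by (intro integral_less_real continuous_on_H_density[OF l] continuous_intros) auto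
  then show ?thesis
    by (simp add: H_integral_def)
qed

lemma H_integral_pos_at_pi_half:
  assumes l: "0 < l2" "l2 \<le> l1" and c: "l1 < c"
  shows "0 < H_integral l1 l2 c (pi / 2)"
proof -
  have "(c, pi / 2) \<in> Omega l1"
    using pi_half_lt_theta_plus[of l1 c] l c by (simp add: Omega_def)
  then have "integral {0..pi} (\<lambda>x. 0) < integral {0..pi} (H_density l1 l2 c (pi / 2))"
    using H_density_pos_at_pi_half[OF l c] pi_ge_two
    by (intro integral_less_real continuous_on_H_density[OF l] continuous_intros) auto
  then show ?thesis
    by (simp add: H_integral_def)
qed

lemma radicand_le_add:
  assumes "0 \<le> cos \<theta>" "0 \<le> B" "B \<le> a"
  shows "radicand c \<theta> B \<le> radicand c \<theta> a + 2 * a * (a - B) / c\<^sup>2"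
proof -
  have D: "(Dco c \<theta>)\<^sup>2 \<le> 1 / c\<^sup>2"
    using abs_square_le_1[of "sin \<theta>"] by (simp add: Dco_def power_divide divide_right_mono)
  have "radicand c \<theta> a - radicand c \<theta> B
      = 2 * cos \<theta> * (a - B) - (Dco c \<theta>)\<^sup>2 * ((a - B) * (a + B))"
    by (simp add: radicand_def algebra_simps power2_eq_square)
  moreover have "0 \<le> 2 * cos \<theta> * (a - B)"
    using assms by simp
  moreover have "(Dco c \<theta>)\<^sup>2 * ((a - B) * (a + B)) \<le> 1 / c\<^sup>2 * ((a - B) * (2 * a))"
    using assms by (intro mult_mono[OF D] mult_left_mono) auto
  moreover have "1 / c\<^sup>2 * ((a - B) * (2 * a)) = 2 * a * (a - B) / c\<^sup>2"
    by simp
  ultimately show ?thesis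
    by linarith
qed

lemma phiRHS_sq_le:
  assumes l: "0 < l2" "l2 \<le> l1" and \<Omega>: "(c, \<theta>) \<in> Omega l1" and cos: "0 \<le> cos \<theta>"
  shows "(phiRHS l1 l2 c \<theta> x)\<^sup>2 \<le> radicand c \<theta> (l1\<^sup>2) + 2 * (l1\<^sup>2 / c * x)\<^sup>2"
proof -
  define a where "a = l1\<^sup>2"
  define B where "B = Bang l1 l2 x"
  have B: "0 \<le> B" "B \<le> a"
    using Bang_pos[OF l] Bang_bounds[of l2 l1 x] l by (auto simp: a_def B_def less_imp_le)
  have "a - B \<le> a * x\<^sup>2"
  proof -
    have "(sin x)\<^sup>2 \<le> x\<^sup>2"
      using abs_sin_x_le_abs_x[of x] by (metis abs_ge_zero power2_abs power_mono)
    moreover have "0 \<le> l1\<^sup>2 - l2\<^sup>2" "l1\<^sup>2 - l2\<^sup>2 \<le> l1\<^sup>2"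
      using l by (auto simp: power_mono)
    ultimately show ?thesis
      unfolding a_def B_def Bang_eq_sin by (simp add: mult_mono)
  qed
  then have "2 * a * (a - B) / c\<^sup>2 \<le> 2 * a * (a * x\<^sup>2) / c\<^sup>2"
    using B by (intro divide_right_mono mult_left_mono) auto
  also have "\<dots> = 2 * (a / c * x)\<^sup>2"
    by (simp add: power_mult_distrib power_divide power2_eq_square mult_ac)
  finally have "2 * a * (a - B) / c\<^sup>2 \<le> 2 * (a / c * x)\<^sup>2" .
  moreover have "(phiRHS l1 l2 c \<theta> x)\<^sup>2 = radicand c \<theta> B"
    using radicand_Bang_pos[OF l \<Omega>] by (simp add: phiRHS_eq_sqrt_radicand B_def less_imp_le)
  ultimately show ?thesis
    using radicand_le_add[OF cos B, of c] by (simp add: a_def)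
qed

lemma H_density_ge:
  assumes l: "0 < l2" "l2 \<le> l1" and \<Omega>: "(c, \<theta>) \<in> Omega l1"
  shows "c\<^sup>2 / (l1\<^sup>2 * phiRHS l1 l2 c \<theta> x) - c / l2\<^sup>2 \<le> H_density l1 l2 c \<theta> x"
proof -
  define B where "B = Bang l1 l2 x"
  define F where "F = phiRHS l1 l2 c \<theta> x"
  have B: "0 < B" "l2\<^sup>2 \<le> B" "B \<le> l1\<^sup>2" and F: "0 < F" and c: "0 < c"
    using Bang_pos[OF l] Bang_bounds[of l2 l1 x] phiRHS_pos[OF l \<Omega>] l \<Omega>
    by (auto simp: B_def F_def Omega_def)
  have "c / B \<le> c / l2\<^sup>2"
    using B c l by (intro divide_left_mono) auto
  moreover have "c\<^sup>2 / (l1\<^sup>2 * F) \<le> c\<^sup>2 / (B * F)"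
    using B F by (intro divide_left_mono mult_right_mono mult_pos_pos) auto
  moreover have "c\<^sup>2 / (B * F) \<le> ((Dco c \<theta>)\<^sup>2 * B\<^sup>2 + c\<^sup>2) / (B * F)"
    using B F by (intro divide_right_mono) auto
  ultimately show ?thesis
    by (simp add: H_density_def B_def[symmetric] F_def[symmetric])
qed

lemma H_density_ge_neg:
  assumes l: "0 < l2" "l2 \<le> l1" and \<Omega>: "(c, \<theta>) \<in> Omega l1"
  shows "- (c / l2\<^sup>2) \<le> H_density l1 l2 c \<theta> x"
proof -
  have "0 \<le> c\<^sup>2 / (l1\<^sup>2 * phiRHS l1 l2 c \<theta> x)"
    using l phiRHS_pos[OF l \<Omega>, of x] by (intro divide_nonneg_pos mult_pos_pos) auto
  then show ?thesis
    using H_density_ge[OF l \<Omega>, of x] by simp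
qed

lemma H_density_ge_inverse:
  assumes l: "0 < l2" "l2 \<le> l1" and \<Omega>: "(c, \<theta>) \<in> Omega l1"
    and "0 < K" "0 < x" and F_le: "phiRHS l1 l2 c \<theta> x \<le> K * x"
  shows "c\<^sup>2 / (l1\<^sup>2 * K) / x - c / l2\<^sup>2 \<le> H_density l1 l2 c \<theta> x"
proof -
  have "c\<^sup>2 / (l1\<^sup>2 * K) / x = c\<^sup>2 / (l1\<^sup>2 * (K * x))"
    by (simp add: mult.assoc)
  also have "\<dots> \<le> c\<^sup>2 / (l1\<^sup>2 * phiRHS l1 l2 c \<theta> x)"
    using F_le phiRHS_pos[OF l \<Omega>, of x] l assms(4,5)
    by (intro divide_left_mono mult_left_mono mult_pos_pos) auto
  finally show ?thesis
    using H_density_ge[OF l \<Omega>, of x] by simp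
qed

lemma H_integral_ge_log:
  assumes l: "0 < l2" "l2 \<le> l1" and \<Omega>: "(c, \<theta>) \<in> Omega l1"
    and s: "0 < s" "s \<le> pi" and K: "0 < K" and F_le: "\<And>x. s \<le> x \<Longrightarrow> phiRHS l1 l2 c \<theta> x \<le> K * x"
  shows "c\<^sup>2 / (l1\<^sup>2 * K) * ln (pi / s) - c * pi / l2\<^sup>2 \<le> H_integral l1 l2 c \<theta>"
proof -
  define \<kappa> where "\<kappa> = c\<^sup>2 / (l1\<^sup>2 * K)"
  define R where "R = c / l2\<^sup>2"
  define h where "h = H_density l1 l2 c \<theta>"
  have int: "h integrable_on {p..q}" for p q
    unfolding h_def using \<Omega>
    by (intro integrable_continuous_real continuous_on_H_density[OF l] continuous_intros) auto
  have "integral {0..s} (\<lambda>x. - R) \<le> integral {0..s} h"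
    using H_density_ge_neg[OF l \<Omega>] by (intro integral_le int) (auto simp: h_def R_def)
  then have I1: "- R * s \<le> integral {0..s} h"
    using s by (simp add: mult.commute)
  have "integral {s..pi} (\<lambda>x. \<kappa> / x - R) \<le> integral {s..pi} h"
    using s H_density_ge_inverse[OF l \<Omega> K _ F_le]
    by (intro integral_le int integrable_continuous_real continuous_intros)
       (auto simp: h_def \<kappa>_def R_def)
  moreover have "integral {s..pi} (\<lambda>x. \<kappa> / x - R) = (\<kappa> * ln pi - R * pi) - (\<kappa> * ln s - R * s)"
  proof (rule integral_eq_antiderivative_diff[OF s(2)])
    fix x assume "x \<in> {s..pi}"
    then have "0 < x"
      using s by auto
    then show "((\<lambda>x. \<kappa> * ln x - R * x) has_real_derivative \<kappa> / x - R) (at x)"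
      by (auto intro!: derivative_eq_intros simp: field_simps)
  qed
  ultimately have I2: "(\<kappa> * ln pi - R * pi) - (\<kappa> * ln s - R * s) \<le> integral {s..pi} h"
    by simp
  have "integral {0..pi} h = integral {0..s} h + integral {s..pi} h"
    using s by (intro Henstock_Kurzweil_Integration.integral_combine[symmetric] int) auto
  moreover have "\<kappa> * ln (pi / s) = \<kappa> * ln pi - \<kappa> * ln s"
    using s by (simp add: ln_div right_diff_distrib)
  moreover have "c * pi / l2\<^sup>2 = R * pi"
    by (simp add: R_def)
  ultimately show ?thesis
    using I1 I2 unfolding H_integral_def h_def[symmetric] \<kappa>_def[symmetric] by linarith
qed

lemma phiRHS_le_linear:
  assumes l: "0 < l2" "l2 \<le> l1" and \<Omega>: "(c, \<theta>) \<in> Omega l1" and cos: "0 \<le> cos \<theta>"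
    and small: "radicand c \<theta> (l1\<^sup>2) \<le> 2 * (l1\<^sup>2 / c * s)\<^sup>2" and s: "0 \<le> s" "s \<le> x"
  shows "phiRHS l1 l2 c \<theta> x \<le> 2 * (l1\<^sup>2 / c) * x"
proof -
  define q where "q = l1\<^sup>2 / c"
  have q: "0 < q"
    using l \<Omega> by (simp add: q_def Omega_def)
  have "(q * s)\<^sup>2 \<le> (q * x)\<^sup>2"
    using q s by (intro power_mono mult_left_mono) auto
  then have "(phiRHS l1 l2 c \<theta> x)\<^sup>2 \<le> 4 * (q * x)\<^sup>2"
    using phiRHS_sq_le[OF l \<Omega> cos, of x] small unfolding q_def[symmetric] by linarith
  also have "\<dots> = (2 * q * x)\<^sup>2"
    by (simp add: power2_eq_square algebra_simps)
  finally show ?thesis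
    unfolding q_def[symmetric] by (rule power2_le_imp_le) (use q s in auto)
qed

lemma exists_theta_radicand_eq:
  assumes c: "0 < c" "c \<le> l1" and \<epsilon>: "0 < \<epsilon>" "\<epsilon> < c\<^sup>2"
  obtains \<theta> where "0 < \<theta>" "\<theta> < theta_plus l1 c" "radicand c \<theta> (l1\<^sup>2) = \<epsilon>"
proof -
  have l1: "0 < l1"
    using c by linarith
  have "c \<le> sqrt 2 * l1"
    using c by (intro le_imp_le_sqrt2_mult)
  then have end_val: "radicand c (theta_plus l1 c) (l1\<^sup>2) = 0"
    using c by (intro radicand_at_theta_plus)
  have start_val: "radicand c 0 (l1\<^sup>2) = c\<^sup>2 + 2 * l1\<^sup>2"
    by (simp add: radicand_def Dco_def)
  have cont: "continuous_on {0..theta_plus l1 c} (\<lambda>\<theta>. radicand c \<theta> (l1\<^sup>2))"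
    unfolding radicand_def by (intro continuous_intros)
  have "\<epsilon> \<le> c\<^sup>2 + 2 * l1\<^sup>2"
    using \<epsilon> zero_le_power2[of l1] by linarith
  then obtain \<theta> where \<theta>: "0 \<le> \<theta>" "\<theta> \<le> theta_plus l1 c" "radicand c \<theta> (l1\<^sup>2) = \<epsilon>"
    using IVT2'[of "\<lambda>\<theta>. radicand c \<theta> (l1\<^sup>2)" "theta_plus l1 c" \<epsilon> 0, OF _ _ _ cont]
      end_val start_val \<epsilon> theta_plus_pos[OF l1 c(1)] by fastforce
  moreover have "\<theta> \<noteq> 0" "\<theta> \<noteq> theta_plus l1 c"
    using \<theta> start_val end_val \<epsilon> l1 by (auto simp: add_pos_pos)
  ultimately show ?thesis
    using that by (simp add: order_less_le)
qed


lemma exists_theta_H_integral_pos: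
  assumes l: "0 < l2" "l2 \<le> l1" and c: "0 < c" "c \<le> l1"
  obtains \<theta> where "0 < \<theta>" "\<theta> < theta_plus l1 c" "0 < H_integral l1 l2 c \<theta>"
proof -
  \<comment> \<open>s is chosen so that the bound of H_integral_ge_log equals \<kappa> > 0, and then \<theta> so close
    to theta_plus that phiRHS is at most linear on [s, pi].\<close>
  define q where "q = l1\<^sup>2 / c"
  define \<kappa> where "\<kappa> = c\<^sup>2 / (l1\<^sup>2 * (2 * q))"
  define L where "L = c * pi / l2\<^sup>2 / \<kappa> + 1"
  define s where "s = pi / exp L"
  have q: "0 < q" and \<kappa>: "0 < \<kappa>" and L: "1 \<le> L"
    using l c by (auto simp: q_def \<kappa>_def L_def)
  have "1 < exp L"
    using L by simp
  then have s: "0 < s" "s < pi"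
    unfolding s_def using divide_strict_left_mono[of 1 "exp L" pi] by auto
  define \<epsilon> where "\<epsilon> = min (2 * (q * s)\<^sup>2) (c\<^sup>2 / 2)"
  have "0 < \<epsilon>" "\<epsilon> \<le> c\<^sup>2 / 2" "0 < c\<^sup>2"
    using q s c by (auto simp: \<epsilon>_def)
  then obtain \<theta> where \<theta>: "0 < \<theta>" "\<theta> < theta_plus l1 c" and rad: "radicand c \<theta> (l1\<^sup>2) = \<epsilon>"
    using exists_theta_radicand_eq[OF c, of \<epsilon>] by auto
  have \<Omega>: "(c, \<theta>) \<in> Omega l1"
    using \<theta> c by (simp add: Omega_def)
  have cos: "0 \<le> cos \<theta>"
    using \<theta> theta_plus_le_pi_half[OF c] by (intro cos_ge_zero) auto
  have "phiRHS l1 l2 c \<theta> x \<le> (2 * q) * x" if "s \<le> x" for x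
    unfolding q_def using rad s that by (intro phiRHS_le_linear[OF l \<Omega> cos]) (auto simp: \<epsilon>_def q_def)
  then have "\<kappa> * ln (pi / s) - c * pi / l2\<^sup>2 \<le> H_integral l1 l2 c \<theta>"
    unfolding \<kappa>_def using q s by (intro H_integral_ge_log[OF l \<Omega>]) auto
  moreover have "\<kappa> * ln (pi / s) - c * pi / l2\<^sup>2 = \<kappa>"
    using \<kappa> by (simp add: s_def L_def distrib_left)
  ultimately show ?thesis
    using that \<theta> \<kappa> by auto
qed

lemma exists_theta_H_integral_pos_below_pi_half:
  assumes l: "0 < l2" "l2 \<le> l1" and c: "0 < c"
  obtains \<theta> where "0 < \<theta>" "\<theta> \<le> pi / 2" "\<theta> < theta_plus l1 c" "0 < H_integral l1 l2 c \<theta>"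
proof (cases "c \<le> l1")
  case True
  obtain \<theta> where \<theta>: "0 < \<theta>" "\<theta> < theta_plus l1 c" "0 < H_integral l1 l2 c \<theta>"
    using exists_theta_H_integral_pos[OF l c True] by blast
  show ?thesis
    using that[OF \<theta>(1) _ \<theta>(2,3)] \<theta>(2) theta_plus_le_pi_half[OF c True] by linarith
next
  case False
  show ?thesis
    by (rule that[of "pi / 2"])
      (use False l H_integral_pos_at_pi_half[OF l] pi_half_lt_theta_plus[of l1 c] in auto)
qed

lemma H_integral_has_unique_zero:
  assumes l: "0 < l2" "l2 \<le> l1" and c: "0 < c"
  shows "\<exists>!\<theta>. 0 < \<theta> \<and> \<theta> < pi / 2 \<and> \<theta> < theta_plus l1 c \<and> H_integral l1 l2 c \<theta> = 0"
proof -
  define A where "A = {\<theta>. 0 \<le> \<theta> \<and> \<theta> \<le> pi / 2 \<and> (c, \<theta>) \<in> Omega l1}"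
  obtain \<theta>1 where \<theta>1: "0 < \<theta>1" "\<theta>1 \<le> pi / 2" "\<theta>1 < theta_plus l1 c" "0 < H_integral l1 l2 c \<theta>1"
    using exists_theta_H_integral_pos_below_pi_half[OF l c] by blast
  then have "continuous_on {0..\<theta>1} (H_integral l1 l2 c)"
    using c by (intro continuous_on_H_integral[OF l]) (auto simp: Omega_def)
  then obtain \<theta>0 where "0 \<le> \<theta>0" "\<theta>0 \<le> \<theta>1" and H\<theta>0: "H_integral l1 l2 c \<theta>0 = 0"
    using IVT'[of "H_integral l1 l2 c" 0 0 \<theta>1] H_integral_neg_at_zero[OF l c] \<theta>1(1,4)
    by (auto simp: less_imp_le)
  moreover have "\<theta>0 \<noteq> 0" "\<theta>0 \<noteq> \<theta>1"
    using H\<theta>0 H_integral_neg_at_zero[OF l c] \<theta>1 by auto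
  ultimately have \<theta>0: "0 < \<theta>0" "\<theta>0 < pi / 2" "\<theta>0 < theta_plus l1 c" "\<theta>0 \<in> A"
    using \<theta>1 c by (auto simp: A_def Omega_def)
  have inj: "inj_on (H_integral l1 l2 c) A"
    unfolding A_def by (rule strict_mono_on_imp_inj_on[OF H_integral_strict_mono_on[OF l]])
  show ?thesis
  proof (rule ex1I[of _ \<theta>0])
    fix \<theta> assume "0 < \<theta> \<and> \<theta> < pi / 2 \<and> \<theta> < theta_plus l1 c \<and> H_integral l1 l2 c \<theta> = 0"
    then show "\<theta> = \<theta>0"
      using inj_onD[OF inj _ _ \<open>\<theta>0 \<in> A\<close>, of \<theta>] H\<theta>0 c by (auto simp: A_def Omega_def)
  qed (use \<theta>0 H\<theta>0 in auto)
qed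

theorem lemma5p2:
  fixes l1 l2 c :: real
  assumes "(l1 > l2 \<and> l2 > 0) \<or> (l1 = 1 \<and> l2 = 1)"
    and "c > 0"
  shows "\<exists>!\<theta>. 0 < \<theta> \<and> \<theta> < pi / 2 \<and> \<theta> < theta_plus l1 c \<and> Hfun l1 l2 c \<theta> = 0"
proof -
  have l: "0 < l2" "l2 \<le> l1"
    using assms(1) by auto
  have "(0 < \<theta> \<and> \<theta> < pi / 2 \<and> \<theta> < theta_plus l1 c \<and> Hfun l1 l2 c \<theta> = 0)
      \<longleftrightarrow> (0 < \<theta> \<and> \<theta> < pi / 2 \<and> \<theta> < theta_plus l1 c \<and> H_integral l1 l2 c \<theta> = 0)" for \<theta>
    using Hfun_eq_H_integral[OF l, of c \<theta>] assms(2) by (auto simp: Omega_def)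
  then show ?thesis
    using H_integral_has_unique_zero[OF l assms(2)] by simp
qed

end
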